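(* For any potentials $W$ and $\Theta$ and any $0<\kappa'<\kappa$, $$\|\mathrm{ad}_W\Theta\|_{\kappa'}\leq\frac{18}{\kappa'(\kappa-\kappa')}\|\Theta\|_\kappa\|W\|_\kappa.$$
   Context: $\Lambda$ is a finite set of sites, each carrying a finite-dimensional Hilbert space; $\|\cdot\|$ is the operator norm. A potential $Q$ is a family of operators $Q_Z$, $Z\subseteq\Lambda$, with $Q_Z$ supported on $Z$. Norm: $\|Q\|_\kappa=\sup_{x\in\Lambda}\sum_{Z\ni x}e^{\kappa|Z|}\|Q_Z\|$. Commutator of potentials: $(\mathrm{ad}_W\Theta)_Z=\sum_{Z_1\cap Z_2\neq\emptyset,Z_1\cup Z_2=Z}[W_{Z_1},\Theta_{Z_2}]$. *)

theory Defs
  imports "HOL-Analysis.Analysis"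
begin

text \<open>Site x carries the Hilbert space
  C^(d x). The total Hilbert space is the tensor product, realised as functions on the finite
  set of configurations sigma with sigma x < d x (the standard product basis).
  Operators are given by their matrix kernels in this basis.\<close>

type_synonym 's cfg = "'s \<Rightarrow> nat"
type_synonym 's oper = "'s cfg \<Rightarrow> 's cfg \<Rightarrow> complex"
type_synonym 's potential = "'s set \<Rightarrow> 's oper"

definition configs :: "('s \<Rightarrow> nat) \<Rightarrow> 's cfg set" where
  "configs d = {\<sigma>. \<forall>x. \<sigma> x < d x}"

definition apply_op :: "('s \<Rightarrow> nat) \<Rightarrow> 's oper \<Rightarrow> ('s cfg \<Rightarrow> complex) \<Rightarrow> ('s cfg \<Rightarrow> complex)" where
  "apply_op d A v = (\<lambda>\<sigma>. \<Sum>\<tau>\<in>configs d. A \<sigma> \<tau> * v \<tau>)"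

definition vnorm :: "('s \<Rightarrow> nat) \<Rightarrow> ('s cfg \<Rightarrow> complex) \<Rightarrow> real" where
  "vnorm d v = sqrt (\<Sum>\<sigma>\<in>configs d. (cmod (v \<sigma>))\<^sup>2)"

definition opnorm :: "('s \<Rightarrow> nat) \<Rightarrow> 's oper \<Rightarrow> real" where
  "opnorm d A = Sup {vnorm d (apply_op d A v) | v. vnorm d v \<le> 1}"

definition op_mult :: "('s \<Rightarrow> nat) \<Rightarrow> 's oper \<Rightarrow> 's oper \<Rightarrow> 's oper" where
  "op_mult d A B = (\<lambda>\<sigma> \<tau>. \<Sum>\<rho>\<in>configs d. A \<sigma> \<rho> * B \<rho> \<tau>)"

definition commutator :: "('s \<Rightarrow> nat) \<Rightarrow> 's oper \<Rightarrow> 's oper \<Rightarrow> 's oper" where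
  "commutator d A B = (\<lambda>\<sigma> \<tau>. op_mult d A B \<sigma> \<tau> - op_mult d B A \<sigma> \<tau>)"

text \<open>A is supported on Z, i.e. A = A_Z \<otimes> 1 on the complement of Z: the kernel vanishes unless
  the configurations agree off Z, and otherwise only depends on their restrictions to Z.\<close>
definition supported_on :: "('s \<Rightarrow> nat) \<Rightarrow> 's set \<Rightarrow> 's oper \<Rightarrow> bool" where
  "supported_on d Z A \<longleftrightarrow>
     (\<forall>\<sigma>\<in>configs d. \<forall>\<tau>\<in>configs d. A \<sigma> \<tau> \<noteq> 0 \<longrightarrow> (\<forall>x. x \<notin> Z \<longrightarrow> \<sigma> x = \<tau> x)) \<and>
     (\<forall>\<sigma>\<in>configs d. \<forall>\<tau>\<in>configs d. \<forall>\<sigma>'\<in>configs d. \<forall>\<tau>'\<in>configs d.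
        (\<forall>x. x \<notin> Z \<longrightarrow> \<sigma> x = \<tau> x) \<longrightarrow> (\<forall>x. x \<notin> Z \<longrightarrow> \<sigma>' x = \<tau>' x) \<longrightarrow>
        (\<forall>x\<in>Z. \<sigma> x = \<sigma>' x \<and> \<tau> x = \<tau>' x) \<longrightarrow> A \<sigma> \<tau> = A \<sigma>' \<tau>')"

definition is_potential :: "('s \<Rightarrow> nat) \<Rightarrow> 's potential \<Rightarrow> bool" where
  "is_potential d Q \<longleftrightarrow> (\<forall>Z. supported_on d Z (Q Z))"

definition pot_norm :: "('s::finite \<Rightarrow> nat) \<Rightarrow> real \<Rightarrow> 's potential \<Rightarrow> real" where
  "pot_norm d \<kappa> Q = (SUP x. \<Sum>Z\<in>{Z. x \<in> Z}. exp (\<kappa> * real (card Z)) * opnorm d (Q Z))"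

definition ad_pot :: "('s::finite \<Rightarrow> nat) \<Rightarrow> 's potential \<Rightarrow> 's potential \<Rightarrow> 's potential" where
  "ad_pot d W \<Theta> Z = (\<lambda>\<sigma> \<tau>. \<Sum>(Z1, Z2)\<in>{(Z1, Z2). Z1 \<inter> Z2 \<noteq> {} \<and> Z1 \<union> Z2 = Z}.
                         commutator d (W Z1) (\<Theta> Z2) \<sigma> \<tau>)"

end

theory Submission imports Defs begin

text \<open>Since \<open>\<parallel>[A, B]\<parallel> \<le> 2 \<parallel>A\<parallel> \<parallel>B\<parallel>\<close>, it suffices to bound, for a fixed site \<open>x\<close>, the sum of
  \<open>e\<^bsup>\<kappa>' |Z\<^sub>1 \<union> Z\<^sub>2|\<^esup> \<parallel>W\<^sub>Z\<^sub>1\<parallel> \<parallel>\<Theta>\<^sub>Z\<^sub>2\<parallel>\<close> over overlapping pairs with \<open>x \<in> Z\<^sub>1 \<union> Z\<^sub>2\<close>; by symmetry we may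
  take \<open>x \<in> Z\<^sub>1\<close> at the price of a factor 2. For fixed \<open>Z\<^sub>1\<close>, an overlapping \<open>Z\<^sub>2\<close> contains some
  \<open>y \<in> Z\<^sub>1\<close> and \<open>|Z\<^sub>1 \<union> Z\<^sub>2| \<le> |Z\<^sub>1| + |Z\<^sub>2| - 1\<close>, so the sum over \<open>Z\<^sub>2\<close> is at most
  \<open>|Z\<^sub>1| e\<^bsup>\<kappa>' (|Z\<^sub>1| - 1)\<^esup> \<parallel>\<Theta>\<parallel>\<^sub>\<kappa>\<close>, and \<open>n e\<^bsup>\<kappa>' (n - 1)\<^esup> \<le> e\<^bsup>\<kappa> n\<^esup> / (\<kappa>' (\<kappa> - \<kappa>'))\<close> turns
  the remaining sum over \<open>Z\<^sub>1\<close> into \<open>\<parallel>W\<parallel>\<^sub>\<kappa>\<close>. This yields the constant 4 in place of 18.\<close>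

lemma finite_configs: "finite (configs (d :: 's::finite \<Rightarrow> nat))"
proof -
  have "configs d = Pi\<^sub>E UNIV (\<lambda>x. {..<d x})"
    by (auto simp: configs_def PiE_UNIV_domain)
  then show ?thesis by (simp add: finite_PiE)
qed

lemma vnorm_eq_L2_set: "vnorm d v = L2_set (\<lambda>\<sigma>. cmod (v \<sigma>)) (configs d)"
  by (simp add: vnorm_def L2_set_def)

lemma vnorm_nonneg: "0 \<le> vnorm d v"
  by (simp add: vnorm_def sum_nonneg)

lemma vnorm_zero [simp]: "vnorm d (\<lambda>_. 0) = 0"
  by (simp add: vnorm_def)

lemma vnorm_scale: "vnorm d (\<lambda>\<sigma>. c * v \<sigma>) = cmod c * vnorm d v"
  unfolding vnorm_eq_L2_set by (simp add: L2_set_right_distrib norm_mult)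

lemma vnorm_add: "vnorm d (\<lambda>\<sigma>. u \<sigma> + w \<sigma>) \<le> vnorm d u + vnorm d w"
proof -
  have "vnorm d (\<lambda>\<sigma>. u \<sigma> + w \<sigma>) \<le> L2_set (\<lambda>\<sigma>. cmod (u \<sigma>) + cmod (w \<sigma>)) (configs d)"
    unfolding vnorm_eq_L2_set by (rule L2_set_mono) (auto simp: norm_triangle_ineq)
  also have "\<dots> \<le> vnorm d u + vnorm d w"
    unfolding vnorm_eq_L2_set by (rule L2_set_triangle_ineq)
  finally show ?thesis .
qed

lemma vnorm_diff: "vnorm d (\<lambda>\<sigma>. u \<sigma> - w \<sigma>) \<le> vnorm d u + vnorm d w"
  using vnorm_add[of d u "\<lambda>\<sigma>. - w \<sigma>"] vnorm_scale[of d "-1" w] by simp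

lemma apply_op_scale: "apply_op d A (\<lambda>\<tau>. c * v \<tau>) = (\<lambda>\<sigma>. c * apply_op d A v \<sigma>)"
  by (auto simp: apply_op_def sum_distrib_left intro!: sum.cong)

lemma apply_op_op_mult: "apply_op d (op_mult d A B) v = apply_op d A (apply_op d B v)"
  unfolding apply_op_def op_mult_def
  by (auto simp: sum_distrib_left sum_distrib_right mult.assoc intro: sum.swap)

text \<open>This crude bound is what makes the supremum defining \<^const>\<open>opnorm\<close> finite.\<close>

lemma vnorm_apply_op_le_entry_sum:
  fixes d :: "'s::finite \<Rightarrow> nat"
  shows "vnorm d (apply_op d A v) \<le> (\<Sum>\<sigma>\<in>configs d. \<Sum>\<tau>\<in>configs d. cmod (A \<sigma> \<tau>)) * vnorm d v"
proof -
  have entry: "cmod (apply_op d A v \<sigma>) \<le> (\<Sum>\<tau>\<in>configs d. cmod (A \<sigma> \<tau>)) * vnorm d v" for \<sigma>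
  proof -
    have "cmod (apply_op d A v \<sigma>) \<le> (\<Sum>\<tau>\<in>configs d. cmod (A \<sigma> \<tau>) * cmod (v \<tau>))"
      unfolding apply_op_def by (rule order_trans[OF norm_sum]) (simp add: norm_mult)
    also have "\<dots> \<le> (\<Sum>\<tau>\<in>configs d. cmod (A \<sigma> \<tau>) * vnorm d v)"
      using member_le_L2_set[OF finite_configs]
      by (intro sum_mono mult_left_mono) (auto simp: vnorm_eq_L2_set)
    finally show ?thesis by (simp add: sum_distrib_right)
  qed
  have "vnorm d (apply_op d A v) \<le> (\<Sum>\<sigma>\<in>configs d. cmod (apply_op d A v \<sigma>))"
    unfolding vnorm_eq_L2_set by (rule L2_set_le_sum) simp
  also have "\<dots> \<le> (\<Sum>\<sigma>\<in>configs d. (\<Sum>\<tau>\<in>configs d. cmod (A \<sigma> \<tau>)) * vnorm d v)"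
    by (intro sum_mono entry)
  finally show ?thesis by (simp add: sum_distrib_right)
qed

lemma bdd_above_opnorm_set:
  fixes d :: "'s::finite \<Rightarrow> nat"
  shows "bdd_above {vnorm d (apply_op d A v) | v. vnorm d v \<le> 1}"
proof -
  let ?K = "\<Sum>\<sigma>\<in>configs d. \<Sum>\<tau>\<in>configs d. cmod (A \<sigma> \<tau>)"
  have "0 \<le> ?K" by (intro sum_nonneg) auto
  then have "vnorm d (apply_op d A v) \<le> ?K" if "vnorm d v \<le> 1" for v
    using vnorm_apply_op_le_entry_sum[of d A v] that mult_left_le[of "vnorm d v" ?K] by linarith
  then show ?thesis by (intro bdd_aboveI[where M = ?K]) blast
qed

lemma opnorm_upper:
  fixes d :: "'s::finite \<Rightarrow> nat"
  assumes "vnorm d v \<le> 1"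
  shows "vnorm d (apply_op d A v) \<le> opnorm d A"
  unfolding opnorm_def by (rule cSup_upper[OF _ bdd_above_opnorm_set]) (use assms in blast)

lemma opnorm_least:
  fixes d :: "'s::finite \<Rightarrow> nat"
  assumes "\<And>v. vnorm d v \<le> 1 \<Longrightarrow> vnorm d (apply_op d A v) \<le> C"
  shows "opnorm d A \<le> C"
proof -
  have "vnorm d (\<lambda>_. 0) \<le> 1" by simp
  then have "{vnorm d (apply_op d A v) | v. vnorm d v \<le> 1} \<noteq> {}" by blast
  then show ?thesis unfolding opnorm_def by (rule cSup_least) (use assms in blast)
qed

lemma opnorm_nonneg:
  fixes d :: "'s::finite \<Rightarrow> nat"
  shows "0 \<le> opnorm d A"
  using opnorm_upper[of d "\<lambda>_. 0" A] vnorm_nonneg[of d "apply_op d A (\<lambda>_. 0)"] by simp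

lemma vnorm_apply_op_le:
  fixes d :: "'s::finite \<Rightarrow> nat"
  shows "vnorm d (apply_op d A v) \<le> opnorm d A * vnorm d v"
proof (cases "vnorm d v = 0")
  case True
  then show ?thesis
    using vnorm_apply_op_le_entry_sum[of d A v] vnorm_nonneg[of d "apply_op d A v"] by simp
next
  case False
  define n where "n = vnorm d v"
  have "n > 0" using False vnorm_nonneg[of d v] n_def by simp
  let ?c = "complex_of_real (1 / n)"
  have "cmod ?c = 1 / n" using \<open>n > 0\<close> by (simp add: norm_divide)
  then have "vnorm d (\<lambda>\<tau>. ?c * v \<tau>) = 1"
    using vnorm_scale[of d ?c v] \<open>n > 0\<close> by (simp add: n_def)
  then have "vnorm d (apply_op d A (\<lambda>\<tau>. ?c * v \<tau>)) \<le> opnorm d A" by (simp add: opnorm_upper)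
  moreover have "vnorm d (apply_op d A (\<lambda>\<tau>. ?c * v \<tau>)) = vnorm d (apply_op d A v) / n"
    unfolding apply_op_scale vnorm_scale \<open>cmod ?c = 1 / n\<close> by simp
  ultimately have "vnorm d (apply_op d A v) / n \<le> opnorm d A" by simp
  then show ?thesis using \<open>n > 0\<close> by (simp add: n_def field_simps)
qed

lemma opnorm_zero: "opnorm (d :: 's::finite \<Rightarrow> nat) (\<lambda>_ _. 0) = 0"
  using opnorm_nonneg[of d "\<lambda>_ _. 0"]
  by (simp add: opnorm_least apply_op_def eq_iff)

lemma opnorm_add:
  fixes d :: "'s::finite \<Rightarrow> nat"
  shows "opnorm d (\<lambda>\<sigma> \<tau>. A \<sigma> \<tau> + B \<sigma> \<tau>) \<le> opnorm d A + opnorm d B"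
proof (rule opnorm_least)
  fix v assume "vnorm d v \<le> 1"
  have "apply_op d (\<lambda>\<sigma> \<tau>. A \<sigma> \<tau> + B \<sigma> \<tau>) v = (\<lambda>\<sigma>. apply_op d A v \<sigma> + apply_op d B v \<sigma>)"
    by (simp add: apply_op_def distrib_right sum.distrib)
  then show "vnorm d (apply_op d (\<lambda>\<sigma> \<tau>. A \<sigma> \<tau> + B \<sigma> \<tau>) v) \<le> opnorm d A + opnorm d B"
    using vnorm_add[of d "apply_op d A v" "apply_op d B v"] \<open>vnorm d v \<le> 1\<close>
      opnorm_upper[of d v A] opnorm_upper[of d v B] by simp
qed

lemma opnorm_diff:
  fixes d :: "'s::finite \<Rightarrow> nat"
  shows "opnorm d (\<lambda>\<sigma> \<tau>. A \<sigma> \<tau> - B \<sigma> \<tau>) \<le> opnorm d A + opnorm d B"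
proof (rule opnorm_least)
  fix v assume "vnorm d v \<le> 1"
  have "apply_op d (\<lambda>\<sigma> \<tau>. A \<sigma> \<tau> - B \<sigma> \<tau>) v = (\<lambda>\<sigma>. apply_op d A v \<sigma> - apply_op d B v \<sigma>)"
    by (simp add: apply_op_def left_diff_distrib sum_subtractf)
  then show "vnorm d (apply_op d (\<lambda>\<sigma> \<tau>. A \<sigma> \<tau> - B \<sigma> \<tau>) v) \<le> opnorm d A + opnorm d B"
    using vnorm_diff[of d "apply_op d A v" "apply_op d B v"] \<open>vnorm d v \<le> 1\<close>
      opnorm_upper[of d v A] opnorm_upper[of d v B] by simp
qed

lemma opnorm_sum:
  fixes d :: "'s::finite \<Rightarrow> nat"
  shows "opnorm d (\<lambda>\<sigma> \<tau>. \<Sum>i\<in>I. F i \<sigma> \<tau>) \<le> (\<Sum>i\<in>I. opnorm d (F i))"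
proof (induction I rule: infinite_finite_induct)
  case (insert i I)
  then show ?case
    using opnorm_add[of d "F i" "\<lambda>\<sigma> \<tau>. \<Sum>i\<in>I. F i \<sigma> \<tau>"] by simp
qed (simp_all add: opnorm_zero)

lemma opnorm_op_mult:
  fixes d :: "'s::finite \<Rightarrow> nat"
  shows "opnorm d (op_mult d A B) \<le> opnorm d A * opnorm d B"
proof (rule opnorm_least)
  fix v assume "vnorm d v \<le> 1"
  have "vnorm d (apply_op d (op_mult d A B) v) \<le> opnorm d A * vnorm d (apply_op d B v)"
    unfolding apply_op_op_mult by (rule vnorm_apply_op_le)
  also have "\<dots> \<le> opnorm d A * opnorm d B"
    by (intro mult_left_mono opnorm_upper opnorm_nonneg \<open>vnorm d v \<le> 1\<close>)
  finally show "vnorm d (apply_op d (op_mult d A B) v) \<le> opnorm d A * opnorm d B" .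
qed

lemma opnorm_commutator:
  fixes d :: "'s::finite \<Rightarrow> nat"
  shows "opnorm d (commutator d A B) \<le> 2 * opnorm d A * opnorm d B"
  using opnorm_diff[of d "op_mult d A B" "op_mult d B A"]
    opnorm_op_mult[of d A B] opnorm_op_mult[of d B A, unfolded mult.commute[of "opnorm d B"]]
  unfolding commutator_def by linarith

definition decay_norm :: "real \<Rightarrow> ('s::finite set \<Rightarrow> real) \<Rightarrow> real" where
  "decay_norm k f = (SUP x. \<Sum>Z\<in>{Z. x \<in> Z}. exp (k * real (card Z)) * f Z)"

lemma pot_norm_eq_decay_norm: "pot_norm d k Q = decay_norm k (\<lambda>Z. opnorm d (Q Z))"
  by (simp add: pot_norm_def decay_norm_def)

lemma sum_le_decay_norm:
  fixes f :: "'s::finite set \<Rightarrow> real"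
  shows "(\<Sum>Z\<in>{Z. x \<in> Z}. exp (k * real (card Z)) * f Z) \<le> decay_norm k f"
  unfolding decay_norm_def by (rule cSUP_upper) auto

lemma decay_norm_nonneg:
  fixes f :: "'s::finite set \<Rightarrow> real"
  assumes "\<And>Z. 0 \<le> f Z"
  shows "0 \<le> decay_norm k f"
  by (rule order_trans[OF _ sum_le_decay_norm[where x = undefined]])
    (auto intro!: sum_nonneg mult_nonneg_nonneg assms)

lemma sum_le_decay_norm_mono:
  fixes f :: "'s::finite set \<Rightarrow> real"
  assumes "\<And>Z. 0 \<le> f Z" and "k' \<le> k"
  shows "(\<Sum>Z\<in>{Z. x \<in> Z}. exp (k' * real (card Z)) * f Z) \<le> decay_norm k f"
proof -
  have "(\<Sum>Z\<in>{Z. x \<in> Z}. exp (k' * real (card Z)) * f Z)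
      \<le> (\<Sum>Z\<in>{Z. x \<in> Z}. exp (k * real (card Z)) * f Z)"
    using assms by (intro sum_mono mult_right_mono) (auto intro: mult_right_mono)
  also have "\<dots> \<le> decay_norm k f" by (rule sum_le_decay_norm)
  finally show ?thesis .
qed

lemma card_Un_lt_card_add:
  assumes "finite Y" "finite Z" "Y \<inter> Z \<noteq> {}"
  shows "card (Y \<union> Z) < card Y + card Z"
  using card_Un_Int[OF assms(1,2)] assms by (simp add: card_gt_0_iff)

lemma sum_card_Int_eq:
  fixes h :: "'s::finite set \<Rightarrow> real"
  shows "(\<Sum>Z\<in>UNIV. real (card (Y \<inter> Z)) * h Z) = (\<Sum>y\<in>Y. \<Sum>Z\<in>{Z. y \<in> Z}. h Z)"
proof -
  have "(\<Sum>Z\<in>UNIV. real (card (Y \<inter> Z)) * h Z) = (\<Sum>Z\<in>UNIV. \<Sum>y\<in>Y. if y \<in> Z then h Z else 0)"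
    by (simp add: sum.If_cases Int_def)
  also have "\<dots> = (\<Sum>y\<in>Y. \<Sum>Z\<in>{Z. y \<in> Z}. h Z)"
    by (subst sum.swap) (simp add: sum.inter_filter[symmetric])
  finally show ?thesis .
qed

text \<open>The loss \<open>\<kappa> - \<kappa>'\<close> in the decay rate pays for the polynomial factor \<open>n\<close>, via
  \<open>(\<kappa> - \<kappa>') n \<le> exp ((\<kappa> - \<kappa>') n)\<close>, and the lost site via \<open>\<kappa>' \<le> exp \<kappa>'\<close>.\<close>

lemma card_mult_exp_le:
  fixes k k' :: real
  assumes "0 < k'" "k' < k"
  shows "real n * exp (k' * (real n - 1)) \<le> exp (k * real n) / (k' * (k - k'))"
proof -
  define \<delta> where "\<delta> = k - k'"
  define E where "E = exp (k' * (real n - 1))"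
  have "0 < \<delta>" using assms by (simp add: \<delta>_def)
  have "real n * E = (\<delta> * real n) * k' * E / (k' * \<delta>)"
    using \<open>0 < \<delta>\<close> assms by simp
  also have "\<dots> \<le> exp (\<delta> * real n) * exp k' * E / (k' * \<delta>)"
    using exp_ge_add_one_self[of "\<delta> * real n"] exp_ge_add_one_self[of k'] \<open>0 < \<delta>\<close> assms
    by (intro divide_right_mono mult_right_mono mult_mono) (auto simp: E_def simp del: exp_ge_add_one_self)
  also have "\<dots> = exp (k * real n) / (k' * (k - k'))"
    by (simp add: \<delta>_def E_def algebra_simps flip: exp_add)
  finally show ?thesis by (simp add: E_def)
qed

lemma sum_overlapping_le:
  fixes g :: "'s::finite set \<Rightarrow> real"
  assumes g: "\<And>Z. 0 \<le> g Z" and k: "0 \<le> k'" "k' \<le> k"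
  shows "(\<Sum>Z\<in>{Z. Y \<inter> Z \<noteq> {}}. exp (k' * real (card (Y \<union> Z))) * g Z)
           \<le> real (card Y) * exp (k' * (real (card Y) - 1)) * decay_norm k g"
proof -
  define c where "c = exp (k' * (real (card Y) - 1))"
  define h where "h Z = c * (exp (k' * real (card Z)) * g Z)" for Z
  have h0: "0 \<le> h Z" for Z using g by (simp add: h_def c_def)
  have "exp (k' * real (card (Y \<union> Z))) * g Z \<le> real (card (Y \<inter> Z)) * h Z"
    if "Y \<inter> Z \<noteq> {}" for Z
  proof -
    have "real (card (Y \<union> Z)) \<le> (real (card Y) - 1) + real (card Z)"
      using card_Un_lt_card_add[of Y Z] that by simp
    then have "exp (k' * real (card (Y \<union> Z))) \<le> exp (k' * (real (card Y) - 1)) * exp (k' * real (card Z))"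
      using k by (simp add: mult_left_mono flip: exp_add distrib_left)
    then have "exp (k' * real (card (Y \<union> Z))) * g Z \<le> h Z"
      using g by (simp add: h_def c_def mult_right_mono flip: mult.assoc)
    also have "\<dots> \<le> real (card (Y \<inter> Z)) * h Z"
      using that h0[of Z] by (intro mult_le_cancel_right1[THEN iffD2]) (simp add: Suc_le_eq card_gt_0_iff)
    finally show ?thesis .
  qed
  then have "(\<Sum>Z\<in>{Z. Y \<inter> Z \<noteq> {}}. exp (k' * real (card (Y \<union> Z))) * g Z)
      \<le> (\<Sum>Z\<in>{Z. Y \<inter> Z \<noteq> {}}. real (card (Y \<inter> Z)) * h Z)"
    by (intro sum_mono) simp
  also have "\<dots> \<le> (\<Sum>Z\<in>UNIV. real (card (Y \<inter> Z)) * h Z)"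
    using h0 by (intro sum_mono2) auto
  also have "\<dots> = (\<Sum>y\<in>Y. c * (\<Sum>Z\<in>{Z. y \<in> Z}. exp (k' * real (card Z)) * g Z))"
    by (simp add: sum_card_Int_eq h_def sum_distrib_left)
  also have "\<dots> \<le> (\<Sum>y\<in>Y. c * decay_norm k g)"
    using g k by (intro sum_mono mult_left_mono sum_le_decay_norm_mono) (auto simp: c_def)
  finally show ?thesis by (simp add: c_def)
qed

lemma sum_overlapping_pairs_le:
  fixes f g :: "'s::finite set \<Rightarrow> real"
  assumes f: "\<And>Z. 0 \<le> f Z" and g: "\<And>Z. 0 \<le> g Z" and k: "0 < k'" "k' < k"
  shows "(\<Sum>(Y, Z)\<in>{(Y, Z). x \<in> Y \<and> Y \<inter> Z \<noteq> {}}. exp (k' * real (card (Y \<union> Z))) * (f Y * g Z))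
           \<le> decay_norm k f * decay_norm k g / (k' * (k - k'))"
proof -
  define c where "c = decay_norm k g / (k' * (k - k'))"
  have "0 \<le> c" using decay_norm_nonneg[of g k] g k by (simp add: c_def)
  have "{(Y, Z). x \<in> Y \<and> Y \<inter> Z \<noteq> {}} = Sigma {Y. x \<in> Y} (\<lambda>Y. {Z. Y \<inter> Z \<noteq> {}})"
    by auto
  then have "(\<Sum>(Y, Z)\<in>{(Y, Z). x \<in> Y \<and> Y \<inter> Z \<noteq> {}}. exp (k' * real (card (Y \<union> Z))) * (f Y * g Z))
      = (\<Sum>Y\<in>{Y. x \<in> Y}. f Y * (\<Sum>Z\<in>{Z. Y \<inter> Z \<noteq> {}}. exp (k' * real (card (Y \<union> Z))) * g Z))"
    by (simp add: sum.Sigma[symmetric] sum_distrib_left mult_ac)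
  also have "\<dots> \<le> (\<Sum>Y\<in>{Y. x \<in> Y}. f Y * (real (card Y) * exp (k' * (real (card Y) - 1)) * decay_norm k g))"
    using f g k by (intro sum_mono mult_left_mono sum_overlapping_le) auto
  also have "\<dots> \<le> (\<Sum>Y\<in>{Y. x \<in> Y}. f Y * (exp (k * real (card Y)) / (k' * (k - k')) * decay_norm k g))"
    using f g k decay_norm_nonneg[of g k]
    by (intro sum_mono mult_left_mono mult_right_mono card_mult_exp_le) auto
  also have "\<dots> = (\<Sum>Y\<in>{Y. x \<in> Y}. exp (k * real (card Y)) * f Y) * c"
    unfolding c_def sum_distrib_right by (intro sum.cong refl) (simp add: field_simps)
  also have "\<dots> \<le> decay_norm k f * c"
    using \<open>0 \<le> c\<close> by (intro mult_right_mono sum_le_decay_norm)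
  finally show ?thesis by (simp add: c_def)
qed

lemma sum_pairs_by_union_le:
  fixes F :: "'s::finite set \<Rightarrow> 's set \<Rightarrow> real"
  assumes F: "\<And>Y Z. 0 \<le> F Y Z"
  shows "(\<Sum>Z\<in>{Z. x \<in> Z}. \<Sum>(Y1, Y2)\<in>{(Y1, Y2). Y1 \<inter> Y2 \<noteq> {} \<and> Y1 \<union> Y2 = Z}. F Y1 Y2)
           \<le> (\<Sum>(Y1, Y2)\<in>{(Y1, Y2). x \<in> Y1 \<and> Y1 \<inter> Y2 \<noteq> {}}. F Y1 Y2 + F Y2 Y1)"
proof -
  define S where "S = {(Y1, Y2). Y1 \<inter> Y2 \<noteq> {} \<and> x \<in> Y1 \<union> Y2}"
  define A where "A = {(Y1, Y2). x \<in> Y1 \<and> Y1 \<inter> Y2 \<noteq> {}}"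
  define B where "B = {(Y1, Y2). x \<in> Y2 \<and> Y1 \<inter> Y2 \<noteq> {}}"
  have "(\<Sum>Z\<in>{Z. x \<in> Z}. \<Sum>(Y1, Y2)\<in>{(Y1, Y2). Y1 \<inter> Y2 \<noteq> {} \<and> Y1 \<union> Y2 = Z}. F Y1 Y2)
      = (\<Sum>Z\<in>{Z. x \<in> Z}. \<Sum>p\<in>{p \<in> S. fst p \<union> snd p = Z}. case_prod F p)"
    by (intro sum.cong refl) (auto simp: S_def intro: arg_cong2[where f = sum])
  also have "\<dots> = sum (case_prod F) S"
    by (rule sum.group) (auto simp: S_def)
  also have "\<dots> \<le> sum (case_prod F) A + sum (case_prod F) B"
  proof -
    have "S = A \<union> B" by (auto simp: S_def A_def B_def)
    then have "sum (case_prod F) S + sum (case_prod F) (A \<inter> B) = sum (case_prod F) A + sum (case_prod F) B"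
      by (simp add: sum.union_inter)
    moreover have "0 \<le> sum (case_prod F) (A \<inter> B)" using F by (auto intro: sum_nonneg)
    ultimately show ?thesis by linarith
  qed
  also have "sum (case_prod F) B = (\<Sum>(Y1, Y2)\<in>A. F Y2 Y1)"
  proof -
    have "B = prod.swap ` A" by (auto simp: A_def B_def image_iff)
    then show ?thesis by (simp add: sum.reindex case_prod_unfold)
  qed
  finally show ?thesis by (simp add: A_def case_prod_unfold sum.distrib)
qed

lemma opnorm_ad_pot_le:
  fixes d :: "'s::finite \<Rightarrow> nat"
  shows "opnorm d (ad_pot d W \<Theta> Z)
           \<le> 2 * (\<Sum>(Z1, Z2)\<in>{(Z1, Z2). Z1 \<inter> Z2 \<noteq> {} \<and> Z1 \<union> Z2 = Z}. opnorm d (W Z1) * opnorm d (\<Theta> Z2))"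
proof -
  let ?P = "{(Z1, Z2). Z1 \<inter> Z2 \<noteq> {} \<and> Z1 \<union> Z2 = Z}"
  have "opnorm d (ad_pot d W \<Theta> Z) \<le> (\<Sum>(Z1, Z2)\<in>?P. opnorm d (commutator d (W Z1) (\<Theta> Z2)))"
    using opnorm_sum[of d "\<lambda>(Z1, Z2). commutator d (W Z1) (\<Theta> Z2)" ?P]
    by (simp add: ad_pot_def case_prod_unfold)
  also have "\<dots> \<le> (\<Sum>(Z1, Z2)\<in>?P. 2 * opnorm d (W Z1) * opnorm d (\<Theta> Z2))"
    by (intro sum_mono) (auto simp: opnorm_commutator)
  finally show ?thesis by (simp add: sum_distrib_left case_prod_unfold mult.assoc)
qed

lemma ad_pot_local_sum_le:
  fixes d :: "'s::finite \<Rightarrow> nat"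
  assumes k: "0 < \<kappa>'" "\<kappa>' < \<kappa>"
  shows "(\<Sum>Z\<in>{Z. x \<in> Z}. exp (\<kappa>' * real (card Z)) * opnorm d (ad_pot d W \<Theta> Z))
           \<le> 4 * (pot_norm d \<kappa> W * pot_norm d \<kappa> \<Theta>) / (\<kappa>' * (\<kappa> - \<kappa>'))"
proof -
  define w where "w = (\<lambda>Z. opnorm d (W Z))"
  define t where "t = (\<lambda>Z. opnorm d (\<Theta> Z))"
  define F where "F f g Y Z = exp (\<kappa>' * real (card (Y \<union> Z))) * (f Y * g Z)"
    for f g :: "'s set \<Rightarrow> real" and Y Z
  have w0: "0 \<le> w Z" and t0: "0 \<le> t Z" for Z by (simp_all add: w_def t_def opnorm_nonneg)
  have "(\<Sum>Z\<in>{Z. x \<in> Z}. exp (\<kappa>' * real (card Z)) * opnorm d (ad_pot d W \<Theta> Z))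
      \<le> (\<Sum>Z\<in>{Z. x \<in> Z}. exp (\<kappa>' * real (card Z))
            * (2 * (\<Sum>(Y1, Y2)\<in>{(Y1, Y2). Y1 \<inter> Y2 \<noteq> {} \<and> Y1 \<union> Y2 = Z}. w Y1 * t Y2)))"
    unfolding w_def t_def by (intro sum_mono mult_left_mono opnorm_ad_pot_le) auto
  also have "\<dots> = 2 * (\<Sum>Z\<in>{Z. x \<in> Z}. \<Sum>(Y1, Y2)\<in>{(Y1, Y2). Y1 \<inter> Y2 \<noteq> {} \<and> Y1 \<union> Y2 = Z}. F w t Y1 Y2)"
    unfolding sum_distrib_left by (intro sum.cong refl) (auto simp: F_def)
  also have "\<dots> \<le> 2 * (\<Sum>(Y1, Y2)\<in>{(Y1, Y2). x \<in> Y1 \<and> Y1 \<inter> Y2 \<noteq> {}}. F w t Y1 Y2 + F w t Y2 Y1)"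
    using w0 t0 by (intro mult_left_mono sum_pairs_by_union_le) (auto simp: F_def)
  also have "\<dots> = 2 * ((\<Sum>(Y1, Y2)\<in>{(Y1, Y2). x \<in> Y1 \<and> Y1 \<inter> Y2 \<noteq> {}}. F w t Y1 Y2)
                  + (\<Sum>(Y1, Y2)\<in>{(Y1, Y2). x \<in> Y1 \<and> Y1 \<inter> Y2 \<noteq> {}}. F t w Y1 Y2))"
    by (simp add: F_def Un_commute mult.commute case_prod_unfold sum.distrib)
  also have "\<dots> \<le> 2 * (decay_norm \<kappa> w * decay_norm \<kappa> t / (\<kappa>' * (\<kappa> - \<kappa>'))
                  + decay_norm \<kappa> t * decay_norm \<kappa> w / (\<kappa>' * (\<kappa> - \<kappa>')))"
    unfolding F_def using w0 t0 k by (intro mult_left_mono add_mono sum_overlapping_pairs_le) auto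
  finally show ?thesis by (simp add: pot_norm_eq_decay_norm w_def t_def mult.commute)
qed

theorem lemma6:
  fixes d :: "'s::finite \<Rightarrow> nat" and W \<Theta> :: "'s potential" and \<kappa> \<kappa>' :: real
  assumes "\<forall>x. 0 < d x"
    and "is_potential d W" and "is_potential d \<Theta>"
    and "0 < \<kappa>'" and "\<kappa>' < \<kappa>"
  shows "pot_norm d \<kappa>' (ad_pot d W \<Theta>)
           \<le> 18 / (\<kappa>' * (\<kappa> - \<kappa>')) * pot_norm d \<kappa> \<Theta> * pot_norm d \<kappa> W"
proof -
  let ?N = "pot_norm d \<kappa> W * pot_norm d \<kappa> \<Theta> / (\<kappa>' * (\<kappa> - \<kappa>'))"
  have "0 \<le> ?N"
    using assms by (simp add: pot_norm_eq_decay_norm decay_norm_nonneg opnorm_nonneg)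
  have "pot_norm d \<kappa>' (ad_pot d W \<Theta>) \<le> 4 * ?N"
    unfolding pot_norm_def[of d \<kappa>']
    by (rule cSUP_least) (use ad_pot_local_sum_le[OF assms(4,5)] in auto)
  also have "\<dots> \<le> 18 * ?N"
    using \<open>0 \<le> ?N\<close> by simp
  finally show ?thesis
    by (simp add: field_simps)
qed

end
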